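(* Under the Setting and Algorithm described in the context, suppose $\{x_k\}_{k\ge1}$ is generated by the inexact CSA algorithm with policy (P1). Then for any $N\ge1$, $$f(\bar x_{N,s})-f(x^* )\le \frac{6D_{\mathcal X}(L_f+L_{g,\mathcal X})}{\sqrt N},$$ and $$G(\bar x_{N,s})\le \frac{12D_{\mathcal X}(L_f+L_{g,\mathcal X})}{\sqrt N}+\frac{\sum_{k\in\mathcal B}\varepsilon_k/\sqrt k}{\sum_{k\in\mathcal B}1/\sqrt k}.$$
   Context: Setting. $\mathcal X\subset\mathbb R^n$ is convex and compact; $f:\mathcal X\to\mathbb R$ is convex and $L_f$-Lipschitz; $\Delta\subset\mathbb R^d$ is compact; $g:\mathcal X\times\Delta\to\mathbb R$ is such that for every $\delta\in\Delta$, $x\mapsto g(x,\delta)$ is convex and $L_{g,\mathcal X}$-Lipschitz, and for every $x\in\mathcal X$, $\delta\mapsto g(x,\delta)$ is $L_{g,\Delta}$-Lipschitz. Let $G(x):=\max_{\delta\in\Delta}g(x,\delta)$ and assume the problem $\min_{x\in\mathcal X}\{f(x):G(x)\le0\}$ has an optimal solution $x^*$. Norms are Euclidean. $f'(x)$ denotes a subgradient of $f$ at $x$ and $g'(x,\delta)$ a subgradient of $g(\cdot,\delta)$ at $x$. Let $\omega_{\mathcal X}:\mathcal X\to\mathbb R$ be continuously differentiable and $1$-strongly convex; $V(x,z):=\omega_{\mathcal X}(z)-\omega_{\mathcal X}(x)-\langle\nabla\omega_{\mathcal X}(x),z-x\rangle$; prox-mapping $P_{x,\mathcal X}(y):=\arg\min_{z\in\mathcal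 X}\{\langle y,z\rangle+V(x,z)\}$; $D_{\mathcal X}:=\sqrt{\max_{x,z\in\mathcal X}V(x,z)}$. Algorithm (inexact CSA). Inputs: $N\ge1$, $x_1\in\mathcal X$, tolerances $\eta_k>0$, step-sizes $\gamma_k>0$. For $k=1,\dots,N$: choose some $\delta_k\in\Delta$ (an approximate maximizer of $g(x_k,\cdot)$); set $h_k=f'(x_k)$ if $g(x_k,\delta_k)\le\eta_k$ and $h_k=g'(x_k,\delta_k)$ otherwise; set $x_{k+1}=P_{x_k,\mathcal X}(\gamma_kh_k)$. For $1\le s\le N$ let $I=\{s,\dots,N\}$, $\mathcal B:=\{k\in I: g(x_k,\delta_k)\le\eta_k\}$, $\mathcal N:=I\setminus\mathcal B$, and output $\bar x_{N,s}:=\sum_{k\in\mathcal B}\gamma_kx_k/\sum_{k\in\mathcal B}\gamma_k$. The cut-generation errors are $\varepsilon_k:=G(x_k)-g(x_k,\delta_k)\ge0$. Policy (P1): $\eta_k=\frac{6(L_f+L_{g,\mathcal X})D_{\mathcal X}}{\sqrt k}$, $\gamma_k=\frac{D_{\mathcal X}}{\sqrt k(L_f+L_{g,\mathcal X})}$ for $k=1,\dots,N$, and $s=\lceil N/2\rceil$. *)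

theory Defs
  imports "HOL-Analysis.Analysis"
begin

definition is_subgradient :: "('a::real_inner \<Rightarrow> real) \<Rightarrow> 'a set \<Rightarrow> 'a \<Rightarrow> 'a \<Rightarrow> bool" where
  "is_subgradient f S x s \<longleftrightarrow> (\<forall>z\<in>S. f z \<ge> f x + inner s (z - x))"

definition strongly_convex_on :: "'a::real_normed_vector set \<Rightarrow> real \<Rightarrow> ('a \<Rightarrow> real) \<Rightarrow> bool" where
  "strongly_convex_on S c w \<longleftrightarrow> convex S \<and>
    (\<forall>x\<in>S. \<forall>y\<in>S. \<forall>t\<in>{0..1}.
        w ((1 - t) *\<^sub>R x + t *\<^sub>R y) \<le> (1 - t) * w x + t * w y - c / 2 * t * (1 - t) * (norm (x - y))\<^sup>2)"

definition C1_on_with_gradient :: "'a::real_inner set \<Rightarrow> ('a \<Rightarrow> real) \<Rightarrow> ('a \<Rightarrow> 'a) \<Rightarrow> bool" where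
  "C1_on_with_gradient S w gw \<longleftrightarrow>
     (\<forall>x\<in>S. (w has_derivative (\<lambda>h. inner (gw x) h)) (at x within S)) \<and> continuous_on S gw"

definition bregman :: "('a::real_inner \<Rightarrow> real) \<Rightarrow> ('a \<Rightarrow> 'a) \<Rightarrow> 'a \<Rightarrow> 'a \<Rightarrow> real" where
  "bregman w gw x z = w z - w x - inner (gw x) (z - x)"

definition is_prox :: "('a::real_inner \<Rightarrow> real) \<Rightarrow> ('a \<Rightarrow> 'a) \<Rightarrow> 'a set \<Rightarrow> 'a \<Rightarrow> 'a \<Rightarrow> 'a \<Rightarrow> bool" where
  "is_prox w gw S x y x' \<longleftrightarrow> x' \<in> S \<and>
     (\<forall>z\<in>S. inner y x' + bregman w gw x x' \<le> inner y z + bregman w gw x z)"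

definition diamD :: "('a::real_inner \<Rightarrow> real) \<Rightarrow> ('a \<Rightarrow> 'a) \<Rightarrow> 'a set \<Rightarrow> real" where
  "diamD w gw S = sqrt (Sup ((\<lambda>(x, z). bregman w gw x z) ` (S \<times> S)))"

definition Gmax :: "('a \<Rightarrow> 'b \<Rightarrow> real) \<Rightarrow> 'b set \<Rightarrow> 'a \<Rightarrow> real" where
  "Gmax g D x = Sup (g x ` D)"

end

theory Submission
  imports Defs
begin

text \<open>Summing the mirror-descent inequality over the second half I = {s..N} of the run bounds
  \<Sum> gamma k * <h k, x k - xstar> by D^2 (1 + \<Sum> 1 / (2 k)). On the steps in B the summand
  dominates gamma k * (f (x k) - f xstar) by the subgradient inequality for f; on the other steps the
  violated cut g(., delta k) separates x k from the feasible xstar by more than eta k, so each of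
  them contributes at least gamma k * eta k = 6 D^2 / k. With the step sizes of (P1) these
  contributions exceed the budget unless B is nonempty, and what remains bounds the gamma-weighted
  gap on B by 6 D L / sqrt N. Convexity of f and of G = max g(., delta) transfers the bounds to the
  weighted average xbar; for the constraint one uses G (x k) = g (x k) (delta k) + eps k \<le> eta k + eps k
  on B, with eta k \<le> 12 D L / sqrt N for k \<ge> N / 2.\<close>

lemma difference_quotient_along_segment_tendsto:
  fixes X :: "'a::real_inner set"
  assumes C1: "C1_on_with_gradient X w gw" and "convex X" and x: "x \<in> X" and z: "z \<in> X"
  shows "((\<lambda>t. (w (x + t *\<^sub>R (z - x)) - w x) / t) \<longlongrightarrow> inner (gw x) (z - x)) (at_right 0)"
proof -
  define p where "p = (\<lambda>t::real. x + t *\<^sub>R (z - x))"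
  have p: "(p has_derivative (\<lambda>t. t *\<^sub>R (z - x))) (at 0 within {0..1})"
    unfolding p_def by (auto intro!: derivative_eq_intros)
  have "p ` {0..1} \<subseteq> X"
  proof
    fix y assume "y \<in> p ` {0..1}"
    then obtain t where t: "t \<in> {0..1}" "y = (1 - t) *\<^sub>R x + t *\<^sub>R z"
      by (auto simp: p_def algebra_simps)
    then show "y \<in> X" using \<open>convex X\<close> x z by (simp add: convex_alt)
  qed
  moreover have "(w has_derivative (\<lambda>h. inner (gw x) h)) (at x within X)"
    using C1 x by (simp add: C1_on_with_gradient_def)
  ultimately have w: "(w has_derivative (\<lambda>h. inner (gw x) h)) (at (p 0) within p ` {0..1})"
    by (auto simp: p_def intro: has_derivative_subset)
  have "((w \<circ> p) has_derivative (*) (inner (gw x) (z - x))) (at 0 within {0..1})"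
    by (rule has_derivative_eq_rhs[OF diff_chain_within[OF p w]]) (auto simp: fun_eq_iff)
  then have "((w \<circ> p) has_field_derivative inner (gw x) (z - x)) (at 0 within {0..1})"
    by (simp add: has_field_derivative_def)
  then have "((\<lambda>t. ((w \<circ> p) t - (w \<circ> p) 0) / (t - 0)) \<longlongrightarrow> inner (gw x) (z - x)) (at 0 within {0..1})"
    by (simp only: has_field_derivative_iff)
  then show ?thesis by (simp add: at_within_Icc_at_right p_def)
qed

lemma bregman_ge_half_norm_sq:
  fixes X :: "'a::real_inner set"
  assumes C1: "C1_on_with_gradient X w gw" and sc: "strongly_convex_on X 1 w"
    and x: "x \<in> X" and z: "z \<in> X"
  shows "(norm (z - x))\<^sup>2 / 2 \<le> bregman w gw x z"
proof -
  have "convex X" using sc by (simp add: strongly_convex_on_def)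
  let ?r = "\<lambda>t. w z - w x - (1 - t) / 2 * (norm (z - x))\<^sup>2"
  have r: "(?r \<longlongrightarrow> w z - w x - (1 - 0) / 2 * (norm (z - x))\<^sup>2) (at_right 0)"
    by (intro tendsto_intros) simp
  have "eventually (\<lambda>t. (w (x + t *\<^sub>R (z - x)) - w x) / t \<le> ?r t) (at_right (0::real))"
  proof (rule eventually_at_rightI[of 0 1])
    fix t :: real assume t: "t \<in> {0<..<1}"
    have "w ((1 - t) *\<^sub>R x + t *\<^sub>R z) \<le> (1 - t) * w x + t * w z - 1 / 2 * t * (1 - t) * (norm (x - z))\<^sup>2"
      using sc x z t unfolding strongly_convex_on_def by auto
    moreover have "(1 - t) *\<^sub>R x + t *\<^sub>R z = x + t *\<^sub>R (z - x)" by (simp add: algebra_simps)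
    ultimately have "w (x + t *\<^sub>R (z - x)) - w x \<le> t * ?r t"
      by (simp add: norm_minus_commute algebra_simps)
    then show "(w (x + t *\<^sub>R (z - x)) - w x) / t \<le> ?r t"
      using t by (simp add: divide_le_eq mult.commute)
  qed simp
  from tendsto_le[OF _ r difference_quotient_along_segment_tendsto[OF C1 \<open>convex X\<close> x z] this]
  show ?thesis by (simp add: bregman_def)
qed

text \<open>First-order optimality of the prox point x', obtained by testing its minimality along the
  segment towards z.\<close>
lemma prox_three_point:
  fixes X :: "'a::real_inner set"
  assumes C1: "C1_on_with_gradient X w gw" and "convex X" and z: "z \<in> X"
    and prox: "is_prox w gw X x y x'"
  shows "inner y (x' - z) \<le> bregman w gw x z - bregman w gw x' z - bregman w gw x x'"
proof -
  have x': "x' \<in> X" using prox by (simp add: is_prox_def)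
  have "eventually (\<lambda>t. inner (gw x - y) (z - x') \<le> (w (x' + t *\<^sub>R (z - x')) - w x') / t)
          (at_right (0::real))"
  proof (rule eventually_at_rightI[of 0 1])
    fix t :: real assume t: "t \<in> {0<..<1}"
    have "x' + t *\<^sub>R (z - x') = (1 - t) *\<^sub>R x' + t *\<^sub>R z" by (simp add: algebra_simps)
    also have "\<dots> \<in> X" using \<open>convex X\<close> x' z t by (simp add: convex_alt)
    finally have "inner y x' + bregman w gw x x'
        \<le> inner y (x' + t *\<^sub>R (z - x')) + bregman w gw x (x' + t *\<^sub>R (z - x'))"
      using prox by (simp add: is_prox_def)
    then have "t * inner (gw x - y) (z - x') \<le> w (x' + t *\<^sub>R (z - x')) - w x'"
      by (simp add: bregman_def algebra_simps inner_diff_right inner_add_right inner_diff_left)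
    then show "inner (gw x - y) (z - x') \<le> (w (x' + t *\<^sub>R (z - x')) - w x') / t"
      using t by (simp add: le_divide_eq mult.commute)
  qed simp
  from tendsto_le[OF _ difference_quotient_along_segment_tendsto[OF C1 \<open>convex X\<close> x' z]
      tendsto_const this]
  show ?thesis by (simp add: bregman_def algebra_simps inner_diff_right inner_diff_left)
qed

lemma prox_descent_step:
  fixes X :: "'a::real_inner set"
  assumes C1: "C1_on_with_gradient X w gw" and sc: "strongly_convex_on X 1 w"
    and x: "x \<in> X" and u: "u \<in> X"
    and prox: "is_prox w gw X x (c *\<^sub>R h) x'" and "c \<ge> 0"
  shows "c * inner h (x - u) \<le> bregman w gw x u - bregman w gw x' u + c\<^sup>2 * (norm h)\<^sup>2 / 2"
proof -
  have "convex X" using sc by (simp add: strongly_convex_on_def)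
  have x': "x' \<in> X" using prox by (simp add: is_prox_def)
  have "inner (c *\<^sub>R h) (x' - u) \<le> bregman w gw x u - bregman w gw x' u - bregman w gw x x'"
    by (rule prox_three_point[OF C1 \<open>convex X\<close> u prox])
  moreover have "(norm (x' - x))\<^sup>2 / 2 \<le> bregman w gw x x'"
    by (rule bregman_ge_half_norm_sq[OF C1 sc x x'])
  moreover have "inner (c *\<^sub>R h) (x - x') \<le> c * norm h * norm (x' - x)"
    using Cauchy_Schwarz_ineq2[of "c *\<^sub>R h" "x - x'"] \<open>c \<ge> 0\<close>
    by (simp add: norm_minus_commute)
  moreover have "c * norm h * norm (x' - x) - (norm (x' - x))\<^sup>2 / 2 \<le> c\<^sup>2 * (norm h)\<^sup>2 / 2"
    using sum_squares_ge_zero[of "c * norm h - norm (x' - x)" 0]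
    by (simp add: power2_eq_square algebra_simps)
  moreover have "c * inner h (x - u) = inner (c *\<^sub>R h) (x' - u) + inner (c *\<^sub>R h) (x - x')"
    by (simp add: inner_diff_right algebra_simps)
  ultimately show ?thesis by linarith
qed

lemma prox_iterates_mem:
  assumes "x s \<in> X"
    and steps: "\<And>k. k \<in> {s..N} \<Longrightarrow> is_prox w gw X (x k) (y k) (x (Suc k))"
    and "k \<in> {s..Suc N}"
  shows "x k \<in> X"
proof (cases "k = s")
  case False
  then have "k - 1 \<in> {s..N}" "Suc (k - 1) = k" using \<open>k \<in> {s..Suc N}\<close> by auto
  then show ?thesis using steps[of "k - 1"] by (simp add: is_prox_def)
qed (use \<open>x s \<in> X\<close> in simp)

lemma mirror_descent_telescoped:
  fixes X :: "'a::real_inner set"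
  assumes C1: "C1_on_with_gradient X w gw" and sc: "strongly_convex_on X 1 w"
    and u: "u \<in> X" and "s \<le> N" and xs: "x s \<in> X"
    and steps: "\<And>k. k \<in> {s..N} \<Longrightarrow> is_prox w gw X (x k) (c k *\<^sub>R h k) (x (Suc k))"
    and c: "\<And>k. k \<in> {s..N} \<Longrightarrow> c k \<ge> 0"
  shows "(\<Sum>k=s..N. c k * inner (h k) (x k - u))
           \<le> bregman w gw (x s) u + (\<Sum>k=s..N. (c k)\<^sup>2 * (norm (h k))\<^sup>2 / 2)"
proof -
  define V where "V k = bregman w gw (x k) u" for k
  have x: "x k \<in> X" if "k \<in> {s..Suc N}" for k
    using prox_iterates_mem[OF xs steps that] .
  have "c k * inner (h k) (x k - u) \<le> V k - V (Suc k) + (c k)\<^sup>2 * (norm (h k))\<^sup>2 / 2"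
    if "k \<in> {s..N}" for k
    unfolding V_def using that by (intro prox_descent_step[OF C1 sc x u steps c]) auto
  then have "(\<Sum>k=s..N. c k * inner (h k) (x k - u))
          \<le> (\<Sum>k=s..N. (V k - V (Suc k)) + (c k)\<^sup>2 * (norm (h k))\<^sup>2 / 2)"
    by (intro sum_mono) simp
  also have "\<dots> = V s - V (Suc N) + (\<Sum>k=s..N. (c k)\<^sup>2 * (norm (h k))\<^sup>2 / 2)"
    using sum_Suc_diff[of s N "\<lambda>k. - V k"] \<open>s \<le> N\<close> by (simp add: sum.distrib)
  also have "\<dots> \<le> V s + (\<Sum>k=s..N. (c k)\<^sup>2 * (norm (h k))\<^sup>2 / 2)"
  proof -
    have "x (Suc N) \<in> X" using x \<open>s \<le> N\<close> by simp
    have "0 \<le> (norm (u - x (Suc N)))\<^sup>2 / 2" by simp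
    also have "\<dots> \<le> V (Suc N)"
      unfolding V_def by (rule bregman_ge_half_norm_sq[OF C1 sc \<open>x (Suc N) \<in> X\<close> u])
    finally show ?thesis by simp
  qed
  finally show ?thesis by (simp add: V_def)
qed

lemma bregman_le_diamD_sq:
  assumes C1: "C1_on_with_gradient X w gw" and "compact X" and "x \<in> X" and "z \<in> X"
  shows "bregman w gw x z \<le> (diamD w gw X)\<^sup>2"
proof -
  let ?V = "\<lambda>(x, z). bregman w gw x z"
  have w: "continuous_on X w"
    using C1 unfolding C1_on_with_gradient_def
    by (meson continuous_on_eq_continuous_within has_derivative_continuous)
  have gw: "continuous_on X gw" using C1 by (simp add: C1_on_with_gradient_def)
  have "continuous_on (X \<times> X) (\<lambda>p. bregman w gw (fst p) (snd p))"
    unfolding bregman_def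
    by (intro continuous_intros continuous_on_compose2[OF w] continuous_on_compose2[OF gw]) auto
  then have "continuous_on (X \<times> X) ?V" by (simp add: case_prod_beta)
  then have bdd: "bdd_above (?V ` (X \<times> X))"
    by (intro bounded_imp_bdd_above compact_imp_bounded compact_continuous_image
        compact_Times \<open>compact X\<close>)
  have "bregman w gw x x = 0" by (simp add: bregman_def)
  then have "0 \<le> Sup (?V ` (X \<times> X))"
    using \<open>x \<in> X\<close> by (intro cSup_upper2[OF _ _ bdd, of "bregman w gw x x"]) force+
  moreover have "bregman w gw x z \<le> Sup (?V ` (X \<times> X))"
    using \<open>x \<in> X\<close> \<open>z \<in> X\<close> by (intro cSup_upper[OF _ bdd]) force
  ultimately show ?thesis by (simp add: diamD_def)
qed

lemma le_Gmax:
  assumes "compact Delta" "continuous_on Delta (g y)" "d \<in> Delta"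
  shows "g y d \<le> Gmax g Delta y"
proof -
  have "bdd_above (g y ` Delta)"
    using assms by (intro bounded_imp_bdd_above compact_imp_bounded compact_continuous_image)
  then show ?thesis unfolding Gmax_def using \<open>d \<in> Delta\<close> by (intro cSup_upper) auto
qed

lemma convex_on_Gmax:
  assumes "compact Delta" "Delta \<noteq> {}"
    and cont: "\<And>y. y \<in> X \<Longrightarrow> continuous_on Delta (g y)"
    and conv: "\<And>d. d \<in> Delta \<Longrightarrow> convex_on X (\<lambda>y. g y d)"
  shows "convex_on X (Gmax g Delta)"
proof
  show "convex X" using conv \<open>Delta \<noteq> {}\<close> by (auto simp: convex_on_def)
  fix t :: real and y z assume t: "0 < t" "t < 1" and "y \<in> X" "z \<in> X"
  show "Gmax g Delta ((1 - t) *\<^sub>R y + t *\<^sub>R z) \<le> (1 - t) * Gmax g Delta y + t * Gmax g Delta z"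
    unfolding Gmax_def[of g Delta "(1 - t) *\<^sub>R y + t *\<^sub>R z"]
  proof (rule cSUP_least[OF \<open>Delta \<noteq> {}\<close>])
    fix d assume "d \<in> Delta"
    have "g ((1 - t) *\<^sub>R y + t *\<^sub>R z) d \<le> (1 - t) * g y d + t * g z d"
      using conv[OF \<open>d \<in> Delta\<close>] t \<open>y \<in> X\<close> \<open>z \<in> X\<close> by (intro convex_onD) auto
    also have "\<dots> \<le> (1 - t) * Gmax g Delta y + t * Gmax g Delta z"
      using le_Gmax[OF \<open>compact Delta\<close> cont \<open>d \<in> Delta\<close>] \<open>y \<in> X\<close> \<open>z \<in> X\<close> t
      by (intro add_mono mult_left_mono) auto
    finally show "g ((1 - t) *\<^sub>R y + t *\<^sub>R z) d \<le> (1 - t) * Gmax g Delta y + t * Gmax g Delta z" .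
  qed
qed

lemma convex_on_weighted_average_le:
  assumes conv: "convex_on X \<phi>" and "finite B" "B \<noteq> {}"
    and pos: "\<And>k. k \<in> B \<Longrightarrow> \<gamma> k > 0" and mem: "\<And>k. k \<in> B \<Longrightarrow> x k \<in> X"
    and le: "\<And>k. k \<in> B \<Longrightarrow> \<phi> (x k) \<le> c + \<psi> k"
  shows "\<phi> ((\<Sum>k\<in>B. \<gamma> k *\<^sub>R x k) /\<^sub>R (\<Sum>k\<in>B. \<gamma> k)) \<le> c + (\<Sum>k\<in>B. \<gamma> k * \<psi> k) / (\<Sum>k\<in>B. \<gamma> k)"
proof -
  define \<Gamma> where "\<Gamma> = (\<Sum>k\<in>B. \<gamma> k)"
  have "\<Gamma> > 0" unfolding \<Gamma>_def using \<open>finite B\<close> \<open>B \<noteq> {}\<close> pos by (intro sum_pos) auto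
  have "(\<Sum>k\<in>B. \<gamma> k / \<Gamma>) = 1" using \<open>\<Gamma> > 0\<close> by (simp add: \<Gamma>_def flip: sum_divide_distrib)
  moreover have "(\<Sum>k\<in>B. \<gamma> k *\<^sub>R x k) /\<^sub>R \<Gamma> = (\<Sum>k\<in>B. (\<gamma> k / \<Gamma>) *\<^sub>R x k)"
    by (simp add: scaleR_sum_right divide_inverse mult.commute)
  ultimately have "\<phi> ((\<Sum>k\<in>B. \<gamma> k *\<^sub>R x k) /\<^sub>R \<Gamma>) \<le> (\<Sum>k\<in>B. \<gamma> k / \<Gamma> * \<phi> (x k))"
    using convex_on_sum[OF \<open>finite B\<close> \<open>B \<noteq> {}\<close> conv, of "\<lambda>k. \<gamma> k / \<Gamma>" x] pos mem \<open>\<Gamma> > 0\<close>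
    by (simp add: less_imp_le)
  also have "\<dots> \<le> (\<Sum>k\<in>B. \<gamma> k / \<Gamma> * (c + \<psi> k))"
    using pos le \<open>\<Gamma> > 0\<close> by (intro sum_mono mult_left_mono) (auto simp: less_imp_le)
  also have "\<dots> = c * (\<Sum>k\<in>B. \<gamma> k / \<Gamma>) + (\<Sum>k\<in>B. \<gamma> k * \<psi> k) / \<Gamma>"
    by (simp add: distrib_left sum.distrib sum_distrib_left sum_divide_distrib mult_ac add_divide_distrib)
  also have "\<dots> = c + (\<Sum>k\<in>B. \<gamma> k * \<psi> k) / \<Gamma>"
    using \<open>(\<Sum>k\<in>B. \<gamma> k / \<Gamma>) = 1\<close> by simp
  finally show ?thesis unfolding \<Gamma>_def .
qed

lemma is_subgradient_gap:
  assumes "is_subgradient \<phi> X x h" "u \<in> X"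
  shows "\<phi> x - \<phi> u \<le> inner h (x - u)"
  using assms by (auto simp: is_subgradient_def inner_diff_right)

lemma nat_ceiling_half_bounds:
  assumes "N \<ge> 1"
  shows "1 \<le> nat \<lceil>real N / 2\<rceil>" "nat \<lceil>real N / 2\<rceil> \<le> N"
    and "real N \<le> 2 * nat \<lceil>real N / 2\<rceil>" "2 * nat \<lceil>real N / 2\<rceil> \<le> real N + 1"
proof -
  have "real N / 2 \<le> \<lceil>real N / 2\<rceil>" "\<lceil>real N / 2\<rceil> < real N / 2 + 1" by linarith+
  moreover have "2 * \<lceil>real N / 2\<rceil> \<le> int N + 1"
    using calculation(2) by linarith
  ultimately show "1 \<le> nat \<lceil>real N / 2\<rceil>" "nat \<lceil>real N / 2\<rceil> \<le> N"
    "real N \<le> 2 * nat \<lceil>real N / 2\<rceil>" "2 * nat \<lceil>real N / 2\<rceil> \<le> real N + 1"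
    using assms by linarith+
qed

lemma mem_second_half:
  assumes "N \<ge> 1" "k \<in> {nat \<lceil>real N / 2\<rceil>..N}"
  shows "1 \<le> k" "k \<le> N" "real N \<le> 2 * real k"
  using nat_ceiling_half_bounds[OF assms(1)] assms(2) by auto

lemma second_half_harmonic_bound:
  assumes "N \<ge> 1"
  defines "I \<equiv> {nat \<lceil>real N / 2\<rceil>..N}"
  shows "2 + (\<Sum>k\<in>I. 1 / real k) / 2 \<le> 6 * (\<Sum>k\<in>I. 1 / (sqrt (real k) * sqrt (real N)))"
proof -
  have per_term: "5 / real N \<le> 6 * (1 / (sqrt (real k) * sqrt (real N))) - (1 / real k) / 2"
    if "k \<in> I" for k
  proof -
    note k = mem_second_half[OF assms(1) that[unfolded I_def]]
    have "sqrt (real k) * sqrt (real N) \<le> sqrt (real N) * sqrt (real N)"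
      using k by (intro mult_right_mono) auto
    then have "1 / real N \<le> 1 / (sqrt (real k) * sqrt (real N))"
      using k by (intro divide_left_mono) auto
    moreover have "(1 / real k) / 2 \<le> 1 / real N" using k by (simp add: field_simps)
    ultimately show ?thesis by simp
  qed
  have "2 \<le> real (card I) * 5 / real N"
    using nat_ceiling_half_bounds[OF assms(1)] assms(1) by (simp add: I_def field_simps)
  also have "\<dots> = (\<Sum>k\<in>I. 5 / real N)" by simp
  also have "\<dots> \<le> (\<Sum>k\<in>I. 6 * (1 / (sqrt (real k) * sqrt (real N))) - (1 / real k) / 2)"
    using per_term by (intro sum_mono)
  finally show ?thesis by (simp add: sum_subtractf sum_distrib_left sum_divide_distrib)
qed

lemma cutting_plane_budget:
  fixes D L :: real
  assumes "finite I" "B \<subseteq> I" "0 \<notin> I" "L > 0"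
    and gamma: "\<And>k. gamma k = D / (sqrt (real k) * L)"
    and sum_a: "(\<Sum>k\<in>I. a k) \<le> D\<^sup>2 + (\<Sum>k\<in>I. (gamma k)\<^sup>2 * L\<^sup>2 / 2)"
    and a_B: "\<And>k. k \<in> B \<Longrightarrow> gamma k * p k \<le> a k"
    and a_off: "\<And>k. k \<in> I - B \<Longrightarrow> gamma k * (6 * L * D / sqrt (real k)) \<le> a k"
  shows "(\<Sum>k\<in>B. gamma k * p k) + 6 * D\<^sup>2 * (\<Sum>k\<in>I - B. 1 / real k)
           \<le> D\<^sup>2 * (1 + (\<Sum>k\<in>I. 1 / real k) / 2)"
proof -
  have pos: "real k > 0" if "k \<in> I" for k using that \<open>0 \<notin> I\<close> by (cases k) auto
  have "gamma k * (6 * L * D / sqrt (real k)) = 6 * D\<^sup>2 * (1 / real k)" if "k \<in> I" for k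
    using pos[OF that] \<open>L > 0\<close> by (simp add: gamma power2_eq_square)
  then have "(\<Sum>k\<in>B. gamma k * p k) + 6 * D\<^sup>2 * (\<Sum>k\<in>I - B. 1 / real k)
      \<le> (\<Sum>k\<in>B. a k) + (\<Sum>k\<in>I - B. a k)"
    unfolding sum_distrib_left using a_B a_off
    by (intro add_mono sum_mono) (auto simp flip: sum_distrib_left)
  also have "\<dots> = (\<Sum>k\<in>I. a k)"
    using sum.subset_diff[OF \<open>B \<subseteq> I\<close> \<open>finite I\<close>, of a] by simp
  also have "(\<Sum>k\<in>I. (gamma k)\<^sup>2 * L\<^sup>2 / 2) = D\<^sup>2 / 2 * (\<Sum>k\<in>I. 1 / real k)"
    unfolding sum_distrib_left
    using pos \<open>L > 0\<close> by (intro sum.cong) (auto simp: gamma power_divide power_mult_distrib)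
  with sum_a have "(\<Sum>k\<in>I. a k) \<le> D\<^sup>2 * (1 + (\<Sum>k\<in>I. 1 / real k) / 2)"
    by (simp add: algebra_simps)
  finally show ?thesis .
qed

text \<open>Each step outside B consumes 6 D^2 / k of a budget of only D^2 (1 + \<Sum> 1 / (2 k)); over the
  second half of the run this leaves room for the steps in B only.\<close>
lemma P1_certificate:
  fixes D L :: real and N :: nat
  assumes "N \<ge> 1" "D > 0" "L > 0"
  defines "I \<equiv> {nat \<lceil>real N / 2\<rceil>..N}"
  assumes gamma: "\<And>k. gamma k = D / (sqrt (real k) * L)"
    and "B \<subseteq> I"
    and sum_a: "(\<Sum>k\<in>I. a k) \<le> D\<^sup>2 + (\<Sum>k\<in>I. (gamma k)\<^sup>2 * L\<^sup>2 / 2)"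
    and a_B: "\<And>k. k \<in> B \<Longrightarrow> gamma k * p k \<le> a k"
    and a_off: "\<And>k. k \<in> I - B \<Longrightarrow> gamma k * (6 * L * D / sqrt (real k)) \<le> a k"
  shows "B \<noteq> {}" and "(\<Sum>k\<in>B. gamma k * p k) / (\<Sum>k\<in>B. gamma k) \<le> 6 * D * L / sqrt (real N)"
proof -
  define r where "r k = 1 / (sqrt (real k) * sqrt (real N))" for k
  define P where "P = (\<Sum>k\<in>B. gamma k * p k)"
  define S where "S = (\<Sum>k\<in>I. 1 / real k)"
  define T where "T = (\<Sum>k\<in>I - B. 1 / real k)"
  have "finite I" by (simp add: I_def)
  note k = mem_second_half[OF \<open>N \<ge> 1\<close>, folded I_def]
  have "0 \<notin> I" using k by fastforce
  have budget: "P + 6 * D\<^sup>2 * T \<le> D\<^sup>2 * (1 + S / 2)"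
    unfolding P_def T_def S_def
    by (rule cutting_plane_budget[OF \<open>finite I\<close> \<open>B \<subseteq> I\<close> \<open>0 \<notin> I\<close> \<open>L > 0\<close> gamma sum_a a_B a_off])
  have "r k \<le> 1 / real k" if "k \<in> I" for k
  proof -
    have "sqrt (real k) * sqrt (real k) \<le> sqrt (real k) * sqrt (real N)"
      by (rule mult_left_mono) (use k[OF that] in auto)
    then show ?thesis
      unfolding r_def using k[OF that] by (intro divide_left_mono) auto
  qed
  then have "D\<^sup>2 * (\<Sum>k\<in>I - B. r k) \<le> D\<^sup>2 * T"
    unfolding T_def by (intro mult_left_mono sum_mono) auto
  moreover have "D\<^sup>2 * (2 + S / 2) \<le> D\<^sup>2 * (6 * ((\<Sum>k\<in>B. r k) + (\<Sum>k\<in>I - B. r k)))"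
    using second_half_harmonic_bound[OF \<open>N \<ge> 1\<close>] sum.subset_diff[OF \<open>B \<subseteq> I\<close> \<open>finite I\<close>, of r]
    by (intro mult_left_mono) (simp_all add: S_def r_def I_def)
  ultimately have "P + D\<^sup>2 \<le> 6 * D\<^sup>2 * (\<Sum>k\<in>B. r k)"
    using budget unfolding distrib_left by linarith
  moreover have "(\<Sum>k\<in>B. gamma k) = D / L * sqrt (real N) * (\<Sum>k\<in>B. r k)"
    unfolding sum_distrib_left using \<open>N \<ge> 1\<close>
    by (intro sum.cong) (auto simp: gamma r_def field_simps)
  ultimately have P_le: "P + D\<^sup>2 \<le> 6 * D * L / sqrt (real N) * (\<Sum>k\<in>B. gamma k)"
    using \<open>N \<ge> 1\<close> \<open>L > 0\<close> by (simp add: power2_eq_square)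
  show "B \<noteq> {}"
  proof
    assume "B = {}"
    with P_le \<open>D > 0\<close> show False by (simp add: P_def)
  qed
  moreover have "gamma k > 0" if "k \<in> B" for k
    using k[of k] that \<open>B \<subseteq> I\<close> \<open>D > 0\<close> \<open>L > 0\<close> by (auto simp: gamma)
  ultimately have "(\<Sum>k\<in>B. gamma k) > 0"
    using \<open>B \<subseteq> I\<close> \<open>finite I\<close> by (intro sum_pos) (auto simp: finite_subset)
  moreover have "P \<le> 6 * D * L / sqrt (real N) * (\<Sum>k\<in>B. gamma k)"
    using P_le zero_le_power2[of D] by linarith
  ultimately show "P / (\<Sum>k\<in>B. gamma k) \<le> 6 * D * L / sqrt (real N)"
    by (simp add: divide_le_eq)
qed

lemma second_half_inv_sqrt_le:
  assumes "N \<ge> 1" "k \<in> {nat \<lceil>real N / 2\<rceil>..N}"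
  shows "1 / sqrt (real k) \<le> 2 / sqrt (real N)"
proof -
  note k = mem_second_half[OF assms]
  have "sqrt (real N) \<le> sqrt (4 * real k)" using k by simp
  also have "\<dots> = 2 * sqrt (real k)" by (simp add: real_sqrt_mult)
  finally show ?thesis using k by (simp add: field_simps)
qed

text \<open>Only feasibility of xstar is assumed: the bounds hold against every feasible point, not just
  the optimal one.\<close>
locale csa_P1_run =
  fixes X :: "'a::real_inner set" and Delta :: "'b::metric_space set"
    and f :: "'a \<Rightarrow> real" and g :: "'a \<Rightarrow> 'b \<Rightarrow> real"
    and Lf LgX LgD :: real
    and w :: "'a \<Rightarrow> real" and gw :: "'a \<Rightarrow> 'a"
    and xstar :: 'a and N :: nat
    and x h :: "nat \<Rightarrow> 'a" and delta :: "nat \<Rightarrow> 'b"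
  assumes X_compact: "compact X"
    and f_convex: "convex_on X f" and f_lip: "Lf-lipschitz_on X f"
    and Delta_compact: "compact Delta" and Delta_ne: "Delta \<noteq> {}"
    and g_convex: "\<And>d. d \<in> Delta \<Longrightarrow> convex_on X (\<lambda>y. g y d)"
    and g_lipX: "\<And>d. d \<in> Delta \<Longrightarrow> LgX-lipschitz_on X (\<lambda>y. g y d)"
    and g_lipD: "\<And>y. y \<in> X \<Longrightarrow> LgD-lipschitz_on Delta (\<lambda>d. g y d)"
    and xstar_mem: "xstar \<in> X" and xstar_feasible: "Gmax g Delta xstar \<le> 0"
    and w_C1: "C1_on_with_gradient X w gw"
    and w_sc: "strongly_convex_on X 1 w"
    and pos: "Lf + LgX > 0" "diamD w gw X > 0"
    and N_pos: "N \<ge> 1"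
    and x1: "x 1 \<in> X"
    and delta_in: "\<And>k. k \<in> {1..N} \<Longrightarrow> delta k \<in> Delta"
    and h_f: "\<And>k. k \<in> {1..N} \<Longrightarrow>
        g (x k) (delta k) \<le> 6 * (Lf + LgX) * diamD w gw X / sqrt (real k) \<Longrightarrow>
        is_subgradient f X (x k) (h k) \<and> norm (h k) \<le> Lf"
    and h_g: "\<And>k. k \<in> {1..N} \<Longrightarrow>
        \<not> g (x k) (delta k) \<le> 6 * (Lf + LgX) * diamD w gw X / sqrt (real k) \<Longrightarrow>
        is_subgradient (\<lambda>y. g y (delta k)) X (x k) (h k) \<and> norm (h k) \<le> LgX"
    and x_step: "\<And>k. k \<in> {1..N} \<Longrightarrow>
        is_prox w gw X (x k) ((diamD w gw X / (sqrt (real k) * (Lf + LgX))) *\<^sub>R h k) (x (Suc k))"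
begin

definition D :: real where "D = diamD w gw X"
definition L :: real where "L = Lf + LgX"
definition eta :: "nat \<Rightarrow> real" where "eta k = 6 * L * D / sqrt (real k)"
definition gamma :: "nat \<Rightarrow> real" where "gamma k = D / (sqrt (real k) * L)"
definition I :: "nat set" where "I = {nat \<lceil>real N / 2\<rceil>..N}"
definition B :: "nat set" where "B = {k \<in> I. g (x k) (delta k) \<le> eta k}"
definition eps :: "nat \<Rightarrow> real" where "eps k = Gmax g Delta (x k) - g (x k) (delta k)"
definition xbar :: 'a where "xbar = (\<Sum>k\<in>B. gamma k *\<^sub>R x k) /\<^sub>R (\<Sum>k\<in>B. gamma k)"

lemma L_pos: "L > 0" and D_pos: "D > 0"
  using pos by (simp_all add: L_def D_def)

lemma I_subset: "I \<subseteq> {1..N}"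
  using nat_ceiling_half_bounds[OF N_pos] by (auto simp: I_def)

lemma B_subset: "B \<subseteq> I"
  by (auto simp: B_def)

lemma finite_B: "finite B"
  using B_subset by (auto simp: I_def intro: finite_subset)

lemma gamma_pos: "k \<in> I \<Longrightarrow> gamma k > 0"
  using I_subset L_pos D_pos by (force simp: gamma_def)

lemma prox_step: "k \<in> {1..N} \<Longrightarrow> is_prox w gw X (x k) (gamma k *\<^sub>R h k) (x (Suc k))"
  using x_step by (simp add: gamma_def D_def L_def)

lemma iterate_mem: "k \<in> {1..Suc N} \<Longrightarrow> x k \<in> X"
  by (rule prox_iterates_mem[OF x1 prox_step])

lemma g_continuous: "y \<in> X \<Longrightarrow> continuous_on Delta (g y)"
  using lipschitz_on_continuous_on[OF g_lipD] by simp

lemma norm_subgradient_le: "k \<in> {1..N} \<Longrightarrow> norm (h k) \<le> L"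
proof -
  obtain d where "d \<in> Delta" using Delta_ne by blast
  then have "Lf \<ge> 0" "LgX \<ge> 0" using f_lip g_lipX by (auto simp: lipschitz_on_def)
  then show "k \<in> {1..N} \<Longrightarrow> norm (h k) \<le> L"
    using h_f h_g by (fastforce simp: L_def)
qed

lemma regret_bound:
  "(\<Sum>k\<in>I. gamma k * inner (h k) (x k - xstar)) \<le> D\<^sup>2 + (\<Sum>k\<in>I. (gamma k)\<^sup>2 * L\<^sup>2 / 2)"
proof -
  define s where "s = nat \<lceil>real N / 2\<rceil>"
  have s: "s \<in> {1..N}" using nat_ceiling_half_bounds[OF N_pos] by (simp add: s_def)
  have "(\<Sum>k\<in>I. gamma k * inner (h k) (x k - xstar))
      \<le> bregman w gw (x s) xstar + (\<Sum>k\<in>I. (gamma k)\<^sup>2 * (norm (h k))\<^sup>2 / 2)"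
  proof -
    have I_eq: "I = {s..N}" by (simp add: I_def s_def)
    have "is_prox w gw X (x k) (gamma k *\<^sub>R h k) (x (Suc k))" "gamma k \<ge> 0" if "k \<in> I" for k
      using prox_step gamma_pos I_subset that by (auto simp: less_imp_le)
    then show ?thesis unfolding I_eq
      by (intro mirror_descent_telescoped[OF w_C1 w_sc xstar_mem]) (use s iterate_mem in auto)
  qed
  also have "\<dots> \<le> D\<^sup>2 + (\<Sum>k\<in>I. (gamma k)\<^sup>2 * L\<^sup>2 / 2)"
  proof (rule add_mono)
    show "bregman w gw (x s) xstar \<le> D\<^sup>2"
      unfolding D_def using s iterate_mem
      by (intro bregman_le_diamD_sq[OF w_C1 X_compact _ xstar_mem]) auto
    have "(norm (h k))\<^sup>2 \<le> L\<^sup>2" if "k \<in> I" for k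
      using norm_subgradient_le that I_subset by (intro power_mono) auto
    then show "(\<Sum>k\<in>I. (gamma k)\<^sup>2 * (norm (h k))\<^sup>2 / 2) \<le> (\<Sum>k\<in>I. (gamma k)\<^sup>2 * L\<^sup>2 / 2)"
      by (intro sum_mono divide_right_mono mult_left_mono) auto
  qed
  finally show ?thesis .
qed

lemma gap_le_on_B:
  assumes "k \<in> B"
  shows "gamma k * (f (x k) - f xstar) \<le> gamma k * inner (h k) (x k - xstar)"
proof -
  have "k \<in> I" "g (x k) (delta k) \<le> 6 * (Lf + LgX) * diamD w gw X / sqrt (real k)"
    using assms by (simp_all add: B_def eta_def L_def D_def)
  with h_f I_subset have "is_subgradient f X (x k) (h k)" by blast
  from is_subgradient_gap[OF this xstar_mem] gamma_pos[OF \<open>k \<in> I\<close>]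
  show ?thesis by (intro mult_left_mono) auto
qed

lemma eta_le_off_B:
  assumes "k \<in> I - B"
  shows "gamma k * eta k \<le> gamma k * inner (h k) (x k - xstar)"
proof -
  have "k \<in> I" "\<not> g (x k) (delta k) \<le> 6 * (Lf + LgX) * diamD w gw X / sqrt (real k)"
    using assms by (simp_all add: B_def eta_def L_def D_def)
  moreover from this have "k \<in> {1..N}" using I_subset by blast
  ultimately have "is_subgradient (\<lambda>y. g y (delta k)) X (x k) (h k)" using h_g by blast
  from is_subgradient_gap[OF this xstar_mem]
  have "g (x k) (delta k) - g xstar (delta k) \<le> inner (h k) (x k - xstar)" .
  moreover have "g xstar (delta k) \<le> 0"
    using le_Gmax[where g = g, OF Delta_compact g_continuous[OF xstar_mem] delta_in[OF \<open>k \<in> {1..N}\<close>]]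
      xstar_feasible by linarith
  ultimately have "eta k \<le> inner (h k) (x k - xstar)"
    using \<open>\<not> g (x k) (delta k) \<le> _\<close> by (simp add: eta_def L_def D_def)
  with gamma_pos[OF \<open>k \<in> I\<close>] show ?thesis by (intro mult_left_mono) auto
qed

lemma B_nonempty: "B \<noteq> {}"
  and weighted_gap_le: "(\<Sum>k\<in>B. gamma k * (f (x k) - f xstar)) / (\<Sum>k\<in>B. gamma k)
                          \<le> 6 * D * L / sqrt (real N)"
  using P1_certificate[OF N_pos D_pos L_pos gamma_def B_subset[unfolded I_def]
      regret_bound[unfolded I_def] gap_le_on_B eta_le_off_B[unfolded I_def eta_def]]
  by auto

lemma objective_bound: "f xbar - f xstar \<le> 6 * D * L / sqrt (real N)"
proof -
  have "f xbar \<le> f xstar + (\<Sum>k\<in>B. gamma k * (f (x k) - f xstar)) / (\<Sum>k\<in>B. gamma k)"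
    unfolding xbar_def
    by (rule convex_on_weighted_average_le[OF f_convex finite_B B_nonempty])
      (use B_subset gamma_pos I_subset iterate_mem in auto)
  with weighted_gap_le show ?thesis by simp
qed

lemma constraint_bound:
  "Gmax g Delta xbar \<le> 12 * D * L / sqrt (real N)
     + (\<Sum>k\<in>B. eps k / sqrt (real k)) / (\<Sum>k\<in>B. 1 / sqrt (real k))"
proof -
  have Gmax_le: "Gmax g Delta (x k) \<le> 12 * D * L / sqrt (real N) + eps k" if "k \<in> B" for k
  proof -
    have "k \<in> I" "g (x k) (delta k) \<le> eta k" using that by (simp_all add: B_def)
    moreover have "eta k \<le> 12 * D * L / sqrt (real N)"
      using second_half_inv_sqrt_le[OF N_pos \<open>k \<in> I\<close>[unfolded I_def]] L_pos D_pos
        mult_left_mono[of "1 / sqrt (real k)" "2 / sqrt (real N)" "6 * L * D"]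
      by (simp add: eta_def mult_ac)
    ultimately show ?thesis by (simp add: eps_def)
  qed
  have "Gmax g Delta xbar \<le> 12 * D * L / sqrt (real N) + (\<Sum>k\<in>B. gamma k * eps k) / (\<Sum>k\<in>B. gamma k)"
    unfolding xbar_def
    by (rule convex_on_weighted_average_le[OF
          convex_on_Gmax[OF Delta_compact Delta_ne g_continuous g_convex] finite_B B_nonempty])
      (use B_subset gamma_pos I_subset iterate_mem Gmax_le in auto)
  moreover have "(\<Sum>k\<in>B. gamma k * eps k) = D / L * (\<Sum>k\<in>B. eps k / sqrt (real k))"
    and "(\<Sum>k\<in>B. gamma k) = D / L * (\<Sum>k\<in>B. 1 / sqrt (real k))"
    unfolding sum_distrib_left by (simp_all add: gamma_def mult.commute)
  ultimately show ?thesis using L_pos D_pos by simp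
qed

end

theorem mainTheorem1:
  fixes X :: "(real ^ 'n) set" and Delta :: "(real ^ 'd) set"
    and f :: "real ^ 'n \<Rightarrow> real" and g :: "real ^ 'n \<Rightarrow> real ^ 'd \<Rightarrow> real"
    and Lf LgX LgD :: real
    and w :: "real ^ 'n \<Rightarrow> real" and gw :: "real ^ 'n \<Rightarrow> real ^ 'n"
    and xstar :: "real ^ 'n"
    and N :: nat
    and x h :: "nat \<Rightarrow> real ^ 'n" and delta :: "nat \<Rightarrow> real ^ 'd"
  assumes X_convex: "convex X" and X_compact: "compact X"
    and f_convex: "convex_on X f" and f_lip: "Lf-lipschitz_on X f"
    and Delta_compact: "compact Delta" and Delta_ne: "Delta \<noteq> {}"
    and g_convex: "\<And>d. d \<in> Delta \<Longrightarrow> convex_on X (\<lambda>y. g y d)"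
    and g_lipX: "\<And>d. d \<in> Delta \<Longrightarrow> LgX-lipschitz_on X (\<lambda>y. g y d)"
    and g_lipD: "\<And>y. y \<in> X \<Longrightarrow> LgD-lipschitz_on Delta (\<lambda>d. g y d)"
    and xstar_feas: "xstar \<in> X" "Gmax g Delta xstar \<le> 0"
    and xstar_opt: "\<And>y. y \<in> X \<Longrightarrow> Gmax g Delta y \<le> 0 \<Longrightarrow> f xstar \<le> f y"
    and w_C1: "C1_on_with_gradient X w gw"
    and w_sc: "strongly_convex_on X 1 w"
    and pos: "Lf + LgX > 0" "diamD w gw X > 0"
    and N_pos: "N \<ge> 1"
    and x1: "x 1 \<in> X"
    and delta_in: "\<And>k. k \<in> {1..N} \<Longrightarrow> delta k \<in> Delta"
    and h_f: "\<And>k. k \<in> {1..N} \<Longrightarrow>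
        g (x k) (delta k) \<le> 6 * (Lf + LgX) * diamD w gw X / sqrt (real k) \<Longrightarrow>
        is_subgradient f X (x k) (h k) \<and> norm (h k) \<le> Lf"
    and h_g: "\<And>k. k \<in> {1..N} \<Longrightarrow>
        \<not> g (x k) (delta k) \<le> 6 * (Lf + LgX) * diamD w gw X / sqrt (real k) \<Longrightarrow>
        is_subgradient (\<lambda>y. g y (delta k)) X (x k) (h k) \<and> norm (h k) \<le> LgX"
    and x_step: "\<And>k. k \<in> {1..N} \<Longrightarrow>
        is_prox w gw X (x k) ((diamD w gw X / (sqrt (real k) * (Lf + LgX))) *\<^sub>R h k) (x (Suc k))"
  shows "let DX = diamD w gw X;
             L = Lf + LgX;
             eta = (\<lambda>k::nat. 6 * L * DX / sqrt (real k));
             gamma = (\<lambda>k::nat. DX / (sqrt (real k) * L));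
             s = nat \<lceil>real N / 2\<rceil>;
             B = {k \<in> {s..N}. g (x k) (delta k) \<le> eta k};
             eps = (\<lambda>k. Gmax g Delta (x k) - g (x k) (delta k));
             xbar = (\<Sum>k\<in>B. gamma k *\<^sub>R x k) /\<^sub>R (\<Sum>k\<in>B. gamma k)
         in f xbar - f xstar \<le> 6 * DX * L / sqrt (real N)
          \<and> Gmax g Delta xbar \<le> 12 * DX * L / sqrt (real N)
               + (\<Sum>k\<in>B. eps k / sqrt (real k)) / (\<Sum>k\<in>B. 1 / sqrt (real k))"
proof -
  interpret run: csa_P1_run X Delta f g Lf LgX LgD w gw xstar N x h delta
    by unfold_locales (fact assms)+
  show ?thesis
    using run.objective_bound run.constraint_bound
    unfolding Let_def run.xbar_def run.B_def run.I_def run.eta_def run.gamma_def run.eps_def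
      run.D_def run.L_def
    by simp
qed

end
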